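(* In the roundabout exploration process described in the context, let $t\in[N]$, let $s=|A(t)|$, and let $1\le i_1<i_2<\dots<i_s\le N$ be the initial states of the agents in $A(t)$ (so $A(t)=\{a_{i_1},\dots,a_{i_s}\}$). Then $[\![i_\ell,i_{\ell+1}[\![\subseteq D_{i_\ell}(t)$ for every $\ell\in[s-1]$, and $[\![i_s,i_1[\![\subseteq D_{i_s}(t)$.
   Context: Let $n\ge 2$ and $k$ be natural numbers, $T$ a tree on an $n$-element vertex set $V$, and $N=2(n-1)$. Fix a root $r$ and a DFS tour of $T$ starting and ending at $r$ that traverses each edge of $T$ exactly twice, giving a cyclic vertex sequence $(v_1,\dots,v_N,v_{N+1})$ with $v_{N+1}=v_1=r$, and tour edges $e_i=\{v_i,v_{i+1}\}$ for $i\in[N]$. For $i,j\in[N]$ the circular interval $[\![i,j]\!]$ is $\{i,i+1,\dots,j\}$ if $i\le j$ and $\{i,\dots,N,1,\dots,j\}$ if $i>j$; $[\![i,j[\![$ denotes $[\![i,j]\!]\setminus\{j\}$. Let $\langle G_1,\dots,G_N\rangle$ be graphs on $V$, each containing all but at most $k$ edges of $T$. Roundabout exploration process: agents $a_1,\dots,a_N$ with initial states $s_i(0)=i$. For steps $t=1,\dots,N$: (Movement) for every $i\in[N]$, if $s_i(t-1)=q$ then $s_i(t)=(q\bmod N)+1$ if $e_q\in E(G_t)$, and $s_i(t)=q$ otherwise. Let $D_i(t)=[\![i,s_i(t)]\!]$ and $D_i(0)=\{i\}$. (Elimination) $A(0)=\{a_1,\dots,a_N\}$; $A(t)$ is obtained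 from $A(t-1)$ by repeatedly removing an arbitrary agent $a_i$ of the current set with $D_i(t)\subseteq\bigcup D_j(t)$ over the other agents $a_j$ of the current set, until no such agent remains. *)

theory Defs
  imports Main
begin

definition is_graph :: "'a set \<Rightarrow> 'a set set \<Rightarrow> bool" where
  "is_graph V E \<longleftrightarrow> (\<forall>e\<in>E. \<exists>x y. x \<in> V \<and> y \<in> V \<and> x \<noteq> y \<and> e = {x, y})"

definition is_walk :: "'a set set \<Rightarrow> 'a list \<Rightarrow> bool" where
  "is_walk E ws \<longleftrightarrow> ws \<noteq> [] \<and> (\<forall>i. Suc i < length ws \<longrightarrow> {ws ! i, ws ! Suc i} \<in> E)"

definition connected_graph :: "'a set \<Rightarrow> 'a set set \<Rightarrow> bool" where
  "connected_graph V E \<longleftrightarrow>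
     (\<forall>x\<in>V. \<forall>y\<in>V. \<exists>ws. is_walk E ws \<and> hd ws = x \<and> last ws = y)"

definition is_cycle :: "'a set set \<Rightarrow> 'a list \<Rightarrow> bool" where
  "is_cycle E cs \<longleftrightarrow> length cs \<ge> 3 \<and> distinct cs \<and> is_walk E cs \<and> {last cs, hd cs} \<in> E"

definition is_tree :: "'a set \<Rightarrow> 'a set set \<Rightarrow> bool" where
  "is_tree V E \<longleftrightarrow> finite V \<and> is_graph V E \<and> connected_graph V E \<and> (\<nexists>cs. is_cycle E cs)"

text \<open>Closed walk v_1,...,v_{N+1} (N = 2(card V - 1)) starting and ending at the root r that
  traverses every tree edge exactly twice (in a tree this is exactly a DFS tour).\<close>
definition dfs_tour :: "'a set \<Rightarrow> 'a set set \<Rightarrow> 'a \<Rightarrow> (nat \<Rightarrow> 'a) \<Rightarrow> bool" where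
  "dfs_tour V E r v \<longleftrightarrow>
     (let N = 2 * (card V - 1) in
       r \<in> V \<and> v 1 = r \<and> v (N + 1) = r \<and>
       (\<forall>i\<in>{1..N}. {v i, v (Suc i)} \<in> E) \<and>
       (\<forall>e\<in>E. card {i\<in>{1..N}. {v i, v (Suc i)} = e} = 2))"

definition tour_edge :: "(nat \<Rightarrow> 'a) \<Rightarrow> nat \<Rightarrow> 'a set" where
  "tour_edge v i = {v i, v (Suc i)}"

definition cint :: "nat \<Rightarrow> nat \<Rightarrow> nat \<Rightarrow> nat set" where
  "cint N i j = (if i \<le> j then {i..j} else {i..N} \<union> {1..j})"

definition cint_ho :: "nat \<Rightarrow> nat \<Rightarrow> nat \<Rightarrow> nat set" where
  "cint_ho N i j = cint N i j - {j}"

fun state :: "nat \<Rightarrow> (nat \<Rightarrow> 'a) \<Rightarrow> (nat \<Rightarrow> 'a set set) \<Rightarrow> nat \<Rightarrow> nat \<Rightarrow> nat" where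
  "state N v G i 0 = i"
| "state N v G i (Suc t) =
     (let q = state N v G i t in
        if tour_edge v q \<in> G (Suc t) then q mod N + 1 else q)"

definition Dset :: "nat \<Rightarrow> (nat \<Rightarrow> 'a) \<Rightarrow> (nat \<Rightarrow> 'a set set) \<Rightarrow> nat \<Rightarrow> nat \<Rightarrow> nat set" where
  "Dset N v G i t = (if t = 0 then {i} else cint N i (state N v G i t))"

definition elim_step :: "(nat \<Rightarrow> nat set) \<Rightarrow> nat set \<Rightarrow> nat set \<Rightarrow> bool" where
  "elim_step D S S' \<longleftrightarrow>
     (\<exists>i\<in>S. D i \<subseteq> (\<Union>j\<in>S - {i}. D j) \<and> S' = S - {i})"

definition elim_done :: "(nat \<Rightarrow> nat set) \<Rightarrow> nat set \<Rightarrow> bool" where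
  "elim_done D S \<longleftrightarrow> (\<forall>i\<in>S. \<not> D i \<subseteq> (\<Union>j\<in>S - {i}. D j))"

definition elim_result :: "(nat \<Rightarrow> nat set) \<Rightarrow> nat set \<Rightarrow> nat set \<Rightarrow> bool" where
  "elim_result D S S' \<longleftrightarrow> (elim_step D)\<^sup>*\<^sup>* S S' \<and> elim_done D S'"

text \<open>A (as sets of initial states of surviving agents) is a valid run of the process\<close>
definition valid_run :: "nat \<Rightarrow> (nat \<Rightarrow> 'a) \<Rightarrow> (nat \<Rightarrow> 'a set set) \<Rightarrow> (nat \<Rightarrow> nat set) \<Rightarrow> bool" where
  "valid_run N v G A \<longleftrightarrow>
     A 0 = {1..N} \<and>
     (\<forall>t\<in>{1..N}. elim_result (\<lambda>i. Dset N v G i t) (A (t - 1)) (A t))"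

end

theory Submission
  imports Defs
begin

text \<open>Agent a_i stands at i advanced cyclically by the number of steps in which it has moved.
  Two agents standing on the same tour edge move together, so an agent never overtakes another
  one: along the cycle it stays behind the next agent and never gains a full lap on the previous
  one. As long as two agents survive, no agent makes N moves, so every D_i(t) is the arc
  swept so far; these arcs only grow, and elimination keeps their union, which is therefore all
  of [N]. A point of the arc from a surviving agent a to the next survivor b that a has not yet
  swept would lie in the arc of some survivor c beyond b; but reaching it from c means that c
  has lapped a.\<close>

definition cdist :: "nat \<Rightarrow> nat \<Rightarrow> nat \<Rightarrow> nat" where
  "cdist N a j = (j + N - a) mod N"

lemma cdist_eq:
  assumes "a \<in> {1..N}" "j \<in> {1..N}"
  shows "cdist N a j = (if a \<le> j then j - a else j + N - a)"
proof (cases "a \<le> j")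
  case True
  then have "(j + N - a) mod N = (j - a) mod N"
    by (metis add_diff_assoc2 mod_add_self2)
  then show ?thesis using assms True by (simp add: cdist_def)
qed (use assms in \<open>simp add: cdist_def\<close>)

lemma cdist_less: "0 < N \<Longrightarrow> cdist N a j < N"
  by (simp add: cdist_def)

lemma cdist_self: "cdist N a a = 0"
  by (simp add: cdist_def)

lemma mem_cint_iff_cdist:
  assumes "a \<in> {1..N}" "s \<in> {1..N}" "j \<in> {1..N}"
  shows "j \<in> cint N a s \<longleftrightarrow> cdist N a j \<le> cdist N a s"
  using assms by (auto simp: cint_def cdist_eq)

lemma cint_subset: "1 \<le> a \<Longrightarrow> s \<le> N \<Longrightarrow> cint N a s \<subseteq> {1..N}"
  by (auto simp: cint_def)

lemma cint_ho_self: "cint_ho N a a = {}"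
  by (simp add: cint_ho_def cint_def)

lemma cyclic_shift_in_range:
  fixes x N :: nat assumes "0 < N" shows "(x - 1) mod N + 1 \<in> {1..N}"
proof -
  have "(x - 1) mod N < N" using assms by simp
  then show ?thesis by simp
qed

lemma cdist_cyclic_shift:
  assumes "a \<in> {1..N}" "m < N"
  shows "cdist N a ((a + m - 1) mod N + 1) = m"
proof (cases "a + m - 1 < N")
  case True
  then show ?thesis using assms cdist_eq[of a N "a + m"] by simp
next
  case False
  then have "(a + m - 1) mod N = (a + m - 1 - N) mod N"
    by (simp add: le_mod_geq)
  also have "\<dots> = a + m - 1 - N" using assms by (intro mod_less) auto
  finally have "(a + m - 1) mod N = a + m - 1 - N" .
  then have "(a + m - 1) mod N + 1 = a + m - N"
    using assms False by linarith
  moreover have "a + m - N \<in> {1..N}" "\<not> a \<le> a + m - N" using assms False by auto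
  ultimately show ?thesis using assms cdist_eq[of a N "a + m - N"] by simp
qed

lemma cdist_wrap:
  assumes "a \<in> {1..N}" "c \<in> {1..N}" "j \<in> {1..N}" "cdist N a j < cdist N a c"
  shows "cdist N c j + cdist N a c = cdist N a j + N"
  using assms cdist_eq[of a N j] cdist_eq[of a N c] cdist_eq[of c N j]
  by (simp split: if_splits)

lemma cdist_inj:
  assumes "a \<in> {1..N}" "b \<in> {1..N}" "j \<in> {1..N}" "cdist N a j = cdist N a b"
  shows "j = b"
  using assms cdist_eq[of a N j] cdist_eq[of a N b]
  by (simp split: if_splits)

fun moves :: "nat \<Rightarrow> (nat \<Rightarrow> 'a) \<Rightarrow> (nat \<Rightarrow> 'a set set) \<Rightarrow> nat \<Rightarrow> nat \<Rightarrow> nat" where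
  "moves N v G i 0 = 0"
| "moves N v G i (Suc t) =
     moves N v G i t + (if tour_edge v (state N v G i t) \<in> G (Suc t) then 1 else 0)"

lemma moves_le: "moves N v G i t \<le> t"
  by (induction t) auto

lemma state_eq_moves:
  assumes "0 < N" "i \<in> {1..N}"
  shows "state N v G i t = (i + moves N v G i t - 1) mod N + 1"
proof (induction t)
  case 0
  have "(i - 1) mod N = i - 1" using assms by (intro mod_less) auto
  then show ?case using assms by simp
next
  case (Suc t)
  have "((i + moves N v G i t - 1) mod N + 1) mod N = (i + moves N v G i t) mod N"
    using assms by (simp add: mod_Suc_eq)
  then show ?case using Suc by (simp add: Let_def)
qed

text \<open>Agents on the same tour edge move together, so none ever overtakes another.\<close>
lemma moves_no_overtaking:
  assumes "0 < N" "1 \<le> a" "a \<le> b" "b \<le> N"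
  shows "a + moves N v G a t \<le> b + moves N v G b t \<and> b + moves N v G b t \<le> a + moves N v G a t + N"
proof (induction t)
  case (Suc t)
  define x where "x = a + moves N v G a t"
  define y where "y = b + moves N v G b t"
  have state_a: "state N v G a t = (x - 1) mod N + 1"
    using state_eq_moves[of N a v G t] assms x_def by simp
  have state_b: "state N v G b t = (y - 1) mod N + 1"
    using state_eq_moves[of N b v G t] assms y_def by simp
  consider "y = x \<or> y = x + N" | "x < y" "y < x + N"
    using Suc x_def y_def by linarith
  then show ?case
  proof cases
    case 1
    have "x + N - 1 = (x - 1) + N" using assms x_def by simp
    then have "state N v G a t = state N v G b t"
      using 1 state_a state_b by auto
    then show ?thesis using Suc x_def y_def by (simp add: Let_def)
  qed (simp_all add: x_def y_def)
qed (use assms in simp)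

lemma cdist_plus_moves_le:
  assumes "0 < N" "a \<in> {1..N}" "c \<in> {1..N}"
  shows "cdist N a c + moves N v G c t \<le> moves N v G a t + N"
proof (cases "a \<le> c")
  case True
  then have "cdist N a c = c - a" using assms cdist_eq by simp
  moreover have "c + moves N v G c t \<le> a + moves N v G a t + N"
    using assms True moves_no_overtaking[of N a c v G t] by auto
  ultimately show ?thesis using True by linarith
next
  case False
  then have "cdist N a c = c + N - a" using assms cdist_eq by simp
  moreover have "c + moves N v G c t \<le> a + moves N v G a t"
    using assms False moves_no_overtaking[of N c a v G t] by auto
  ultimately show ?thesis using assms(2) by auto
qed

lemma Dset_subset:
  assumes "0 < N" "a \<in> {1..N}"
  shows "Dset N v G a t \<subseteq> {1..N}"
proof (cases "t = 0")
  case False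
  have "state N v G a t \<in> {1..N}"
    using assms state_eq_moves cyclic_shift_in_range by metis
  then show ?thesis using False assms cint_subset by (simp add: Dset_def)
qed (use assms in \<open>simp add: Dset_def\<close>)

text \<open>After exactly N moves the state is back at a and D_a(t) collapses to {a}, hence the
  bound on the moves.\<close>
lemma mem_Dset_iff:
  assumes "0 < N" "a \<in> {1..N}" "j \<in> {1..N}" "0 < t" "moves N v G a t < N"
  shows "j \<in> Dset N v G a t \<longleftrightarrow> cdist N a j \<le> moves N v G a t"
proof -
  define s where "s = state N v G a t"
  have s: "s = (a + moves N v G a t - 1) mod N + 1"
    using state_eq_moves assms s_def by blast
  then have "s \<in> {1..N}" "cdist N a s = moves N v G a t"
    using assms cyclic_shift_in_range cdist_cyclic_shift by simp_all
  then show ?thesis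
    using assms mem_cint_iff_cdist[of a N s j] by (simp add: Dset_def s_def)
qed

lemma Dset_mono_Suc:
  assumes "0 < N" "a \<in> {1..N}" "moves N v G a (Suc t) < N"
  shows "Dset N v G a t \<subseteq> Dset N v G a (Suc t)"
proof
  fix j assume j: "j \<in> Dset N v G a t"
  have moves_t: "moves N v G a t \<le> moves N v G a (Suc t)" by simp
  have j_range: "j \<in> {1..N}" using j Dset_subset assms by blast
  have "cdist N a j \<le> moves N v G a t"
  proof (cases "t = 0")
    case True
    then show ?thesis using j by (simp add: Dset_def cdist_self)
  next
    case False
    then show ?thesis
      using j j_range assms moves_t mem_Dset_iff[of N a j t v G] by simp
  qed
  then show "j \<in> Dset N v G a (Suc t)"
    using assms j_range moves_t mem_Dset_iff[of N a j "Suc t" v G] by simp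
qed

lemma elim_step_subset_Union_eq:
  assumes "elim_step D S S'"
  shows "S' \<subseteq> S" "\<Union>(D ` S') = \<Union>(D ` S)"
proof -
  obtain i where i: "i \<in> S" "D i \<subseteq> \<Union>(D ` (S - {i}))" and S': "S' = S - {i}"
    using assms unfolding elim_step_def by blast
  show "S' \<subseteq> S" using S' by blast
  have "S = insert i S'" using i(1) S' by blast
  then have "\<Union>(D ` S) = D i \<union> \<Union>(D ` S')" by simp
  also have "\<dots> = \<Union>(D ` S')" using i(2) unfolding S'[symmetric] by (rule Un_absorb1)
  finally show "\<Union>(D ` S') = \<Union>(D ` S)" by (rule sym)
qed

lemma elim_steps_subset_Union_eq:
  assumes "(elim_step D)\<^sup>*\<^sup>* S S'"
  shows "S' \<subseteq> S \<and> \<Union>(D ` S') = \<Union>(D ` S)"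
  using assms
proof (induction rule: rtranclp_induct)
  case base
  show ?case by simp
next
  case (step S' S'')
  then show ?case using elim_step_subset_Union_eq[OF step(2)] by (metis order_trans)
qed

lemma elim_done_dominating_singleton:
  assumes "elim_done D S" "c \<in> S" "\<And>i. i \<in> S \<Longrightarrow> D i \<subseteq> D c"
  shows "S = {c}"
proof -
  have "i = c" if "i \<in> S" for i
  proof (rule ccontr)
    assume "i \<noteq> c"
    then have "D i \<subseteq> (\<Union>j\<in>S - {i}. D j)" using assms(2,3) that by blast
    then show False using assms(1) that unfolding elim_done_def by blast
  qed
  then show ?thesis using assms(2) by blast
qed

lemma valid_run_Suc:
  assumes "valid_run N v G A" "Suc t \<le> N"
  shows "A (Suc t) \<subseteq> A t"
    and "(\<Union>i\<in>A (Suc t). Dset N v G i (Suc t)) = (\<Union>i\<in>A t. Dset N v G i (Suc t))"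
    and "elim_done (\<lambda>i. Dset N v G i (Suc t)) (A (Suc t))"
proof -
  have "Suc t \<in> {1..N}" using assms(2) by simp
  then have "elim_result (\<lambda>i. Dset N v G i (Suc t)) (A (Suc t - 1)) (A (Suc t))"
    using assms(1) unfolding valid_run_def by blast
  then have steps: "(elim_step (\<lambda>i. Dset N v G i (Suc t)))\<^sup>*\<^sup>* (A t) (A (Suc t))"
    and final: "elim_done (\<lambda>i. Dset N v G i (Suc t)) (A (Suc t))"
    by (simp_all add: elim_result_def)
  show "A (Suc t) \<subseteq> A t"
    and "(\<Union>i\<in>A (Suc t). Dset N v G i (Suc t)) = (\<Union>i\<in>A t. Dset N v G i (Suc t))"
    using elim_steps_subset_Union_eq[OF steps] by simp_all
  show "elim_done (\<lambda>i. Dset N v G i (Suc t)) (A (Suc t))" by (fact final)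
qed

lemma valid_run_subset:
  assumes "valid_run N v G A" "t \<le> N"
  shows "A t \<subseteq> {1..N}"
  using assms(2)
proof (induction t)
  case 0
  then show ?case using assms(1) by (simp add: valid_run_def)
next
  case (Suc t)
  have "A (Suc t) \<subseteq> A t" using valid_run_Suc(1)[OF assms(1) Suc.prems] .
  then show ?case using Suc by simp
qed

text \<open>An agent that has moved at every step covers the whole cycle at time N - 1, which
  eliminates all other agents.\<close>
lemma valid_run_moves_less:
  assumes "2 \<le> N" "valid_run N v G A" "Suc t \<le> N" "2 \<le> card (A (Suc t))" "c \<in> A t"
  shows "moves N v G c (Suc t) < N"
proof (rule ccontr)
  assume "\<not> moves N v G c (Suc t) < N"
  moreover have "moves N v G c (Suc t) \<le> Suc (moves N v G c t)" by simp
  ultimately have "Suc t = N" "moves N v G c t = t"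
    using assms(3) moves_le[of N v G c "Suc t"] moves_le[of N v G c t] by linarith+
  then obtain t' where t': "t = Suc t'" using assms(1) by (cases t) auto
  have A_t: "A t \<subseteq> {1..N}" using valid_run_subset[OF assms(2)] assms(3) by simp
  then have c: "c \<in> {1..N}" using assms(5) by blast
  have "Dset N v G i t \<subseteq> Dset N v G c t" if "i \<in> A t" for i
  proof -
    have "j \<in> Dset N v G c t" if "j \<in> {1..N}" for j
      using \<open>Suc t = N\<close> \<open>moves N v G c t = t\<close> t' c that
        mem_Dset_iff[of N c j t v G] cdist_less[of N c j] by simp
    then have "{1..N} \<subseteq> Dset N v G c t" by blast
    moreover have "i \<in> {1..N}" using that A_t by blast
    ultimately show ?thesis using Dset_subset[of N i v G t] by auto
  qed
  moreover have "elim_done (\<lambda>i. Dset N v G i t) (A t)"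
    using valid_run_Suc(3)[OF assms(2), of t'] assms(3) t' by simp
  ultimately have "A t = {c}"
    using elim_done_dominating_singleton[of "\<lambda>i. Dset N v G i t"] assms(5) by blast
  then have "card (A (Suc t)) \<le> card {c}"
    using valid_run_Suc(1)[OF assms(2,3)] by (intro card_mono) auto
  then show False using assms(4) by simp
qed

lemma valid_run_covers:
  assumes "2 \<le> N" "valid_run N v G A" "t \<le> N" "2 \<le> card (A t)"
  shows "{1..N} \<subseteq> (\<Union>i\<in>A t. Dset N v G i t)"
  using assms(3,4)
proof (induction t)
  case 0
  then show ?case using assms(2) by (auto simp: valid_run_def Dset_def)
next
  case (Suc t)
  have A_Suc: "A (Suc t) \<subseteq> A t" using valid_run_Suc(1)[OF assms(2) Suc.prems(1)] .
  have A_t: "A t \<subseteq> {1..N}" using valid_run_subset[OF assms(2)] Suc.prems(1) by simp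
  then have "card (A (Suc t)) \<le> card (A t)"
    using A_Suc finite_subset[OF A_t] card_mono by blast
  then have "{1..N} \<subseteq> (\<Union>i\<in>A t. Dset N v G i t)" using Suc by simp
  also have "\<dots> \<subseteq> (\<Union>i\<in>A t. Dset N v G i (Suc t))"
  proof (intro UN_mono order.refl)
    fix i assume i: "i \<in> A t"
    then have "i \<in> {1..N}" using A_t by blast
    moreover have "moves N v G i (Suc t) < N"
      using valid_run_moves_less[OF assms(1,2) Suc.prems i] .
    ultimately show "Dset N v G i t \<subseteq> Dset N v G i (Suc t)"
      using Dset_mono_Suc assms(1) by simp
  qed
  also have "\<dots> = (\<Union>i\<in>A (Suc t). Dset N v G i (Suc t))"
    using valid_run_Suc(2)[OF assms(2) Suc.prems(1)] by simp
  finally show ?case .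
qed

lemma cint_ho_subset_Dset_next_survivor:
  assumes "2 \<le> N" "valid_run N v G A" "t \<in> {1..N}" "a \<in> A t" "b \<in> A t"
    and nearest: "\<And>c. c \<in> A t \<Longrightarrow> c \<noteq> a \<Longrightarrow> cdist N a b \<le> cdist N a c"
  shows "cint_ho N a b \<subseteq> Dset N v G a t"
proof (cases "a = b")
  case True
  then show ?thesis by (simp add: cint_ho_self)
next
  case False
  obtain t' where t': "t = Suc t'" using assms(3) by (cases t) auto
  have A_t: "A t \<subseteq> {1..N}" using valid_run_subset[OF assms(2)] assms(3) by simp
  have "card {a, b} \<le> card (A t)"
    using assms(4,5) finite_subset[OF A_t] by (intro card_mono) auto
  then have card_A: "2 \<le> card (A t)" using False by simp
  have moves_less: "moves N v G c t < N" if "c \<in> A t" for c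
  proof -
    have "c \<in> A t'" using that valid_run_Suc(1)[OF assms(2)] assms(3) t' by auto
    then show ?thesis using valid_run_moves_less[OF assms(1,2)] assms(3) card_A t' by simp
  qed
  have mem_Dset: "j \<in> Dset N v G c t \<longleftrightarrow> cdist N c j \<le> moves N v G c t"
    if "c \<in> A t" "j \<in> {1..N}" for c j
  proof -
    have "c \<in> {1..N}" using that(1) A_t by blast
    then show ?thesis
      using mem_Dset_iff[of N c j t v G] that(2) assms(1,3) moves_less[OF that(1)] by simp
  qed
  have a: "a \<in> {1..N}" and b: "b \<in> {1..N}" using assms(4,5) A_t by auto
  show ?thesis
  proof
    fix j assume "j \<in> cint_ho N a b"
    then have j: "j \<in> {1..N}" "j \<in> cint N a b" "j \<noteq> b"
      using cint_subset[of a b N] a b by (auto simp: cint_ho_def)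
    have "cdist N a j \<le> cdist N a b" using mem_cint_iff_cdist[OF a b j(1)] j(2) by simp
    moreover have "cdist N a j \<noteq> cdist N a b" using cdist_inj[OF a b j(1)] j(3) by blast
    ultimately have "cdist N a j < cdist N a b" by simp
    show "j \<in> Dset N v G a t"
    proof (rule ccontr)
      assume "j \<notin> Dset N v G a t"
      then have "moves N v G a t < cdist N a j" using mem_Dset assms(4) j(1) by simp
      obtain c where c: "c \<in> A t" "j \<in> Dset N v G c t"
        using valid_run_covers[OF assms(1,2) _ card_A] assms(3) j(1) by auto
      have c_range: "c \<in> {1..N}" using c(1) A_t by blast
      have "cdist N c j \<le> moves N v G c t" using mem_Dset c j(1) by blast
      moreover have "c \<noteq> a" using c \<open>j \<notin> Dset N v G a t\<close> by blast
      then have "cdist N a j < cdist N a c"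
        using nearest[OF c(1)] \<open>cdist N a j < cdist N a b\<close> by linarith
      then have "cdist N c j + cdist N a c = cdist N a j + N"
        using cdist_wrap[OF a c_range j(1)] by blast
      moreover have "cdist N a c + moves N v G c t \<le> moves N v G a t + N"
        using cdist_plus_moves_le[OF _ a c_range] assms(1) by simp
      ultimately show False using \<open>moves N v G a t < cdist N a j\<close> by linarith
    qed
  qed
qed

lemma cdist_sorted_list_of_set_next:
  assumes "S \<subseteq> {1..N}"
  defines "xs \<equiv> sorted_list_of_set S"
  assumes "l < length xs" "c \<in> S" "c \<noteq> xs ! l"
  shows "cdist N (xs ! l) (xs ! (Suc l mod length xs)) \<le> cdist N (xs ! l) c"
proof -
  have "finite S" using assms(1) finite_subset by blast
  then have set_xs: "set xs = S" and sorted: "sorted_wrt (<) xs"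
    by (simp_all add: xs_def)
  have less: "xs ! p < xs ! q" if "p < q" "q < length xs" for p q
    using sorted that by (simp add: sorted_wrt_iff_nth_less)
  have range: "xs ! p \<in> {1..N}" if "p < length xs" for p
    using that set_xs assms(1) nth_mem by blast
  obtain p where p: "p < length xs" "c = xs ! p" using assms(4) set_xs by (metis in_set_conv_nth)
  then have "p \<noteq> l" using assms(5) by blast
  show ?thesis
  proof (cases "Suc l < length xs")
    case True
    then have "xs ! l < xs ! Suc l" using less by blast
    moreover have "p < l \<or> p = Suc l \<or> Suc l < p" using \<open>p \<noteq> l\<close> by linarith
    then have "xs ! Suc l \<le> c \<or> c < xs ! l"
      using less[of "Suc l" p] less[of p l] p assms(3) by auto
    ultimately show ?thesis
      using True p range[of l] range[of "Suc l"] range[of p] cdist_eq[of "xs ! l" N]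
      by (auto split: if_splits)
  next
    case False
    then have "Suc l = length xs" using assms(3) by simp
    then have "xs ! 0 \<le> c" "c < xs ! l"
      using less[of 0 p] less[of p l] p \<open>p \<noteq> l\<close> assms(3) by (cases "p = 0", auto)
    moreover have "0 < length xs" using assms(3) by linarith
    then have "xs ! l \<in> {1..N}" "xs ! 0 \<in> {1..N}" "c \<in> {1..N}"
      using range assms(3) p by blast+
    ultimately show ?thesis
      using \<open>Suc l = length xs\<close> cdist_eq[of "xs ! l" N] by auto
  qed
qed

lemma cint_ho_sorted_survivors_subset_Dset:
  assumes "2 \<le> N" "valid_run N v G A" "t \<in> {1..N}"
  defines "xs \<equiv> sorted_list_of_set (A t)"
  assumes "l < length xs"
  shows "cint_ho N (xs ! l) (xs ! (Suc l mod length xs)) \<subseteq> Dset N v G (xs ! l) t"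
proof (rule cint_ho_subset_Dset_next_survivor[OF assms(1-3)])
  have A_t: "A t \<subseteq> {1..N}" using valid_run_subset[OF assms(2)] assms(3) by simp
  then have set_xs: "set xs = A t" using finite_subset[OF A_t] by (simp add: xs_def)
  have "Suc l mod length xs < length xs" using assms(5) by (intro mod_less_divisor) linarith
  then show "xs ! l \<in> A t" "xs ! (Suc l mod length xs) \<in> A t"
    using assms(5) set_xs nth_mem by blast+
  show "cdist N (xs ! l) (xs ! (Suc l mod length xs)) \<le> cdist N (xs ! l) c"
    if "c \<in> A t" "c \<noteq> xs ! l" for c
    using cdist_sorted_list_of_set_next[OF A_t, folded xs_def] assms(5) that .
qed

theorem lemma10:
  fixes V :: "'a set" and E :: "'a set set" and r :: 'a and v :: "nat \<Rightarrow> 'a"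
    and G :: "nat \<Rightarrow> 'a set set" and A :: "nat \<Rightarrow> nat set" and n k N t :: nat
  assumes "n \<ge> 2" and "card V = n"
    and "is_tree V E"
    and "N = 2 * (n - 1)"
    and "dfs_tour V E r v"
    and "\<And>t. t \<in> {1..N} \<Longrightarrow> is_graph V (G t) \<and> card (E - G t) \<le> k"
    and "valid_run N v G A"
    and "t \<in> {1..N}"
  shows "let xs = sorted_list_of_set (A t); s = length xs in
           (\<forall>l\<in>{1..s - 1}. cint_ho N (xs ! (l - 1)) (xs ! l) \<subseteq> Dset N v G (xs ! (l - 1)) t) \<and>
           cint_ho N (xs ! (s - 1)) (xs ! 0) \<subseteq> Dset N v G (xs ! (s - 1)) t"
proof -
  have N: "2 \<le> N" using assms(1,4) by simp
  define xs where "xs = sorted_list_of_set (A t)"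
  note next_subset = cint_ho_sorted_survivors_subset_Dset[OF N assms(7,8), folded xs_def]
  show ?thesis
    unfolding Let_def xs_def[symmetric]
  proof (intro conjI ballI)
    fix l assume "l \<in> {1..length xs - 1}"
    then have "l - 1 < length xs" "Suc (l - 1) = l" "l < length xs" by auto
    then show "cint_ho N (xs ! (l - 1)) (xs ! l) \<subseteq> Dset N v G (xs ! (l - 1)) t"
      using next_subset[of "l - 1"] by simp
  next
    show "cint_ho N (xs ! (length xs - 1)) (xs ! 0) \<subseteq> Dset N v G (xs ! (length xs - 1)) t"
      using next_subset[of "length xs - 1"] by (cases xs) (simp_all add: cint_ho_self)
  qed
qed

end
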